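(* Consider the linear network processes (all activation and output functions replaced by the identity) with input $x^{(t)}\in\mathbb{R}^{p_x}$ and i.i.d. errors $\varepsilon^{(t)}$: (RNN) $y^{(t)}=W_{zh}h^{(t)}+\varepsilon^{(t)}$, $h^{(t)}=W_{hh}h^{(t-1)}+W_{hx}x^{(t)}$; (MRNNF) $y^{(t)}=W_{zh}h^{(t)}+W_{zm}m^{(t)}+\varepsilon^{(t)}$, $h^{(t)}=W_{hh}h^{(t-1)}+W_{hx}x^{(t)}$, $m^{(t)}=W_{mm}m^{(t-1)}+W_{mf}\big((I-\mathcal{B})^d-I\big)x^{(t)}$, with a constant memory parameter $d=(d_1,\dots,d_{p_x})'$, $d_i\in(0,0.5)$. Then, in terms of the definition of long memory network process below, the MRNNF has the capability of handling long-range dependence data (its linear network process can have long memory), while the RNN cannot (its linear network process never has long memory).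
   Context: $B$ is the backshift operator, $B^jX_t=X_{t-j}$. For scalar $d$, $(1-B)^d=\sum_{j=0}^\infty w_j(d)B^j$ with $w_j(d)=\Gamma(j-d)/(j!\,\Gamma(-d))=\prod_{i=0}^{j-1}(i-d)/(i+1)$, and $w_j(d)$ is asymptotically proportional to $j^{-d-1}$. For a vector $d=(d_1,\dots,d_{p_x})'$, $(I-\mathcal{B})^d$ is the diagonal operator $\mathrm{diag}((1-B)^{d_1},\dots,(1-B)^{d_{p_x}})$ acting componentwise. A network process of the form $y^{(t)}=\sum_{k=0}^\infty A_k x^{(t-k)}+\varepsilon^{(t)}$ with coefficient matrices $A_k$ and i.i.d. $\varepsilon^{(t)}$ has long memory if there exist indices $i,j$ and $d\in(0,0.5)$ such that $(A_k)_{ij}\sim k^{-d-1}$ as $k\to\infty$ (decay at this polynomial rate). A network is said to have the capability of handling long-range dependence data if its linear network process (obtained by letting all output and activation functions be the identity) has long memory in this sense. *)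

theory Defs
  imports "HOL-Analysis.Analysis" "HOL-Library.Landau_Symbols"
begin

primrec matpow :: "real^'n^'n \<Rightarrow> nat \<Rightarrow> real^'n^'n" where
  "matpow A 0 = mat 1"
| "matpow A (Suc k) = A ** matpow A k"

text \<open>Fractional differencing weights: (1-B)^d = sum_j fdiff_w j d B^j,
  w_j(d) = prod_{i<j} (i-d)/(i+1).\<close>
definition fdiff_w :: "nat \<Rightarrow> real \<Rightarrow> real" where
  "fdiff_w j d = (\<Prod>i<j. (real i - d) / (real i + 1))"

text \<open>Coefficient of B^j in the diagonal operator (I-B)^d - I, d a vector.\<close>
definition fdiff_minus_I_coeff :: "real^'x \<Rightarrow> nat \<Rightarrow> real^'x^'x" where
  "fdiff_minus_I_coeff d j =
     (if j = 0 then 0 else (\<chi> a b. if a = b then fdiff_w j (d $ a) else 0))"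

text \<open>Long memory of a linear network process y_t = sum_k A_k x_{t-k} + eps_t:
  some entry (A_k)_{ij} decays like (is asymptotically proportional to) k^{-d-1},
  d in (0,1/2).\<close>
definition long_memory :: "(nat \<Rightarrow> real^'x^'y) \<Rightarrow> bool" where
  "long_memory A \<longleftrightarrow> (\<exists>i j d c. 0 < d \<and> d < 1/2 \<and> c \<noteq> 0 \<and>
      (\<lambda>k. A k $ i $ j) \<sim>[at_top] (\<lambda>k. c * real k powr (-d-1)))"

text \<open>Coefficients A_k of the linear RNN process:
  h_t = W_hh h_{t-1} + W_hx x_t, y_t = W_zh h_t + eps_t  gives
  A_k = W_zh W_hh^k W_hx.\<close>
definition rnn_coeff ::
  "real^'h^'y \<Rightarrow> real^'h^'h \<Rightarrow> real^'x^'h \<Rightarrow> nat \<Rightarrow> real^'x^'y" where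
  "rnn_coeff Wzh Whh Whx k = Wzh ** matpow Whh k ** Whx"

text \<open>Coefficients of the linear MRNNF process:
  m_t = W_mm m_{t-1} + W_mf ((I-B)^d - I) x_t, y_t = W_zh h_t + W_zm m_t + eps_t, so
  A_k = W_zh W_hh^k W_hx + W_zm sum_{j=1..k} W_mm^(k-j) W_mf D_j(d).\<close>
definition mrnnf_coeff ::
  "real^'h^'y \<Rightarrow> real^'h^'h \<Rightarrow> real^'x^'h \<Rightarrow> real^'m^'y \<Rightarrow> real^'m^'m \<Rightarrow> real^'x^'m
    \<Rightarrow> real^'x \<Rightarrow> nat \<Rightarrow> real^'x^'y" where
  "mrnnf_coeff Wzh Whh Whx Wzm Wmm Wmf d k =
     Wzh ** matpow Whh k ** Whx
     + Wzm ** (\<Sum>j\<in>{1..k}. matpow Wmm (k - j) ** Wmf ** fdiff_minus_I_coeff d j)"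

end

theory Submission
  imports Defs "HOL-Real_Asymp.Real_Asymp"
begin

text \<open>
  The RNN coefficients \<open>A k = Wzh Whh^k Whx\<close> satisfy a nontrivial linear recurrence, since
  the powers of \<open>Whh\<close> are linearly dependent in the finite-dimensional space of matrices.
  A sequence \<open>a k \<sim> c k powr (-d-1)\<close> with \<open>d > 0\<close> satisfies no such recurrence: it tends
  to \<open>0\<close> and \<open>a (k+i) / a k \<longrightarrow> 1\<close>, which forces the coefficients of the recurrence to sum
  to \<open>0\<close>; summation by parts then yields a recurrence of smaller order, for a sequence that is
  constant and tends to \<open>0\<close>.

  For the MRNNF keep only \<open>Wzm\<close> and \<open>Wmf\<close>, all of whose entries are \<open>1\<close>: every entry of
  \<open>A k\<close> is then a multiple of \<open>w k (d l) = (-1)^k (d l gchoose k) \<sim> k powr (-d l-1) / \<Gamma>(-d l)\<close>.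
\<close>

lemma sum_mult_shift_eq_sum_tails_mult_diff:
  fixes a c :: "nat \<Rightarrow> 'a::comm_ring"
  shows "(\<Sum>j\<le>r. c j * a (k + j)) - (\<Sum>j\<le>r. c j) * a k
       = (\<Sum>i<r. (\<Sum>j\<in>{i<..r}. c j) * (a (Suc k + i) - a (k + i)))"
proof -
  have "(\<Sum>j\<le>r. c j * a (k + j)) - (\<Sum>j\<le>r. c j) * a k = (\<Sum>j\<le>r. c j * (a (k + j) - a k))"
    by (simp add: sum_subtractf sum_distrib_right right_diff_distrib)
  also have "\<dots> = (\<Sum>j\<le>r. \<Sum>i\<in>{i\<in>{..<r}. i < j}. c j * (a (Suc k + i) - a (k + i)))"
  proof (rule sum.cong[OF refl])
    fix j
    assume "j \<in> {..r}"
    then have "{i\<in>{..<r}. i < j} = {..<j}"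
      by auto
    then show "c j * (a (k + j) - a k)
        = (\<Sum>i\<in>{i\<in>{..<r}. i < j}. c j * (a (Suc k + i) - a (k + i)))"
      using sum_lessThan_telescope[of "\<lambda>i. a (k + i)" j]
      by (simp add: sum_distrib_left[symmetric])
  qed
  also have "\<dots> = (\<Sum>i<r. \<Sum>j\<in>{j\<in>{..r}. i < j}. c j * (a (Suc k + i) - a (k + i)))"
    by (rule sum.swap_restrict) auto
  also have "\<dots> = (\<Sum>i<r. (\<Sum>j\<in>{i<..r}. c j) * (a (Suc k + i) - a (k + i)))"
    by (intro sum.cong) (auto simp: sum_distrib_right intro!: sum.cong)
  finally show ?thesis .
qed

lemma linear_recurrence_coeffs_sum_eq_0:
  fixes a c :: "nat \<Rightarrow> real"
  assumes ratio: "\<And>i. (\<lambda>k. a (k + i) / a k) \<longlonglongrightarrow> 1"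
    and nonzero: "\<forall>\<^sub>F k in sequentially. a k \<noteq> 0"
    and rec: "\<And>k. (\<Sum>j\<le>r. c j * a (k + j)) = 0"
  shows "(\<Sum>j\<le>r. c j) = 0"
proof -
  have "(\<lambda>k. \<Sum>j\<le>r. c j * (a (k + j) / a k)) \<longlonglongrightarrow> (\<Sum>j\<le>r. c j * 1)"
    by (intro tendsto_intros ratio)
  moreover have "\<forall>\<^sub>F k in sequentially. (\<Sum>j\<le>r. c j * (a (k + j) / a k)) = 0"
    using nonzero by eventually_elim (simp add: sum_divide_distrib[symmetric] rec)
  then have "(\<lambda>k. \<Sum>j\<le>r. c j * (a (k + j) / a k)) \<longlonglongrightarrow> 0"
    by (rule tendsto_eventually)
  ultimately show ?thesis
    using LIMSEQ_unique by fastforce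
qed

lemma no_linear_recurrence:
  fixes a c :: "nat \<Rightarrow> real"
  assumes vanishing: "a \<longlonglongrightarrow> 0"
    and ratio: "\<And>i. (\<lambda>k. a (k + i) / a k) \<longlonglongrightarrow> 1"
    and nonzero: "\<forall>\<^sub>F k in sequentially. a k \<noteq> 0"
    and leading: "c r \<noteq> 0"
  shows "\<not> (\<forall>k. (\<Sum>j\<le>r. c j * a (k + j)) = 0)"
  using leading
proof (induction r arbitrary: c)
  case 0
  then show ?case
    using nonzero eventually_False_sequentially eventually_mono by fastforce
next
  case (Suc r)
  show ?case
  proof
    assume rec: "\<forall>k. (\<Sum>j\<le>Suc r. c j * a (k + j)) = 0"
    define q where "q i = (\<Sum>j\<in>{i<..Suc r}. c j)" for i
    define b where "b k = (\<Sum>i\<le>r. q i * a (k + i))" for k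
    have "(\<Sum>j\<le>Suc r. c j) = 0"
      using linear_recurrence_coeffs_sum_eq_0[OF ratio nonzero] rec by blast
    moreover have "b (Suc k) - b k = (\<Sum>j\<le>Suc r. c j * a (k + j)) - (\<Sum>j\<le>Suc r. c j) * a k" for k
      unfolding sum_mult_shift_eq_sum_tails_mult_diff lessThan_Suc_atMost b_def q_def
      by (simp add: sum_subtractf right_diff_distrib)
    ultimately have step: "b (Suc k) = b k" for k
      using rec by simp
    have "b k = b 0" for k
      by (induction k) (simp_all add: step)
    then have b_const: "b = (\<lambda>_. b 0)"
      by blast
    have "b \<longlonglongrightarrow> (\<Sum>i\<le>r. q i * 0)"
      unfolding b_def using vanishing
      by (intro tendsto_intros) (simp add: LIMSEQ_ignore_initial_segment)
    then have "(\<lambda>_. b 0) \<longlonglongrightarrow> 0"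
      by (simp add: b_const[symmetric])
    then have "\<forall>k. b k = 0"
      using b_const LIMSEQ_const_iff by metis
    moreover have "{r<..Suc r} = {Suc r}"
      by auto
    then have "q r = c (Suc r)"
      by (simp add: q_def)
    ultimately show False
      using Suc by (auto simp: b_def)
  qed
qed

lemma asymp_equiv_powr_eventually_nonzero:
  fixes a :: "nat \<Rightarrow> real"
  assumes "a \<sim>[at_top] (\<lambda>k. c * real k powr p)" and "c \<noteq> 0"
  shows "\<forall>\<^sub>F k in sequentially. a k \<noteq> 0"
proof -
  have "\<forall>\<^sub>F k in sequentially. c * real k powr p \<noteq> 0"
    using eventually_gt_at_top[of 0] by eventually_elim (use \<open>c \<noteq> 0\<close> in simp)
  with asymp_equiv_eventually_zeros[OF assms(1)] show ?thesis
    by eventually_elim simp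
qed

lemma asymp_equiv_powr_tendsto_0:
  fixes a :: "nat \<Rightarrow> real"
  assumes "a \<sim>[at_top] (\<lambda>k. c * real k powr p)" and "p < 0"
  shows "a \<longlonglongrightarrow> 0"
proof -
  have "(\<lambda>k. c * real k powr p) \<longlonglongrightarrow> c * 0"
    by (intro tendsto_intros tendsto_neg_powr filterlim_real_sequentially \<open>p < 0\<close>)
  then show ?thesis
    using asymp_equiv_tendsto_transfer[OF asymp_equiv_symI[OF assms(1)]] by simp
qed

lemma asymp_equiv_powr_shift_ratio:
  fixes a :: "nat \<Rightarrow> real"
  assumes equiv: "a \<sim>[at_top] (\<lambda>k. c * real k powr p)" and "c \<noteq> 0"
  shows "(\<lambda>k. a (k + i) / a k) \<longlonglongrightarrow> 1"
proof -
  have "(\<lambda>k. a (k + i)) \<sim>[at_top] (\<lambda>k. c * real (k + i) powr p)"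
    using asymp_equiv_compose'[OF equiv filterlim_add_const_nat_at_top] .
  also have "(\<lambda>k. c * real (k + i) powr p) \<sim>[at_top] (\<lambda>k. c * real k powr p)"
    by (intro asymp_equiv_mult asymp_equiv_refl) real_asymp
  also have "(\<lambda>k. c * real k powr p) \<sim>[at_top] a"
    using equiv by (rule asymp_equiv_symI)
  finally have "(\<lambda>k. a (k + i)) \<sim>[at_top] a" .
  moreover have "\<forall>\<^sub>F k in sequentially. a k \<noteq> 0"
    using equiv \<open>c \<noteq> 0\<close> by (rule asymp_equiv_powr_eventually_nonzero)
  ultimately show ?thesis
    by (rule asymp_equivD_strong[OF _ eventually_mono]) simp
qed

lemma in_span_image_lessThan:
  fixes x :: "nat \<Rightarrow> 'a::real_vector"
  assumes "y \<in> span (x ` {..<n})"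
  shows "\<exists>c. y = (\<Sum>j<n. c j *\<^sub>R x j)"
  using assms
proof (induction n arbitrary: y)
  case 0
  then show ?case by simp
next
  case (Suc n)
  then obtain k where "y - k *\<^sub>R x n \<in> span (x ` {..<n})"
    by (auto simp: lessThan_Suc span_breakdown_eq)
  then obtain c where "y - k *\<^sub>R x n = (\<Sum>j<n. c j *\<^sub>R x j)"
    using Suc.IH by blast
  then have "y = (\<Sum>j<Suc n. (c(n := k)) j *\<^sub>R x j)"
    by (simp add: algebra_simps)
  then show ?case
    by blast
qed

lemma ex_nontrivial_linear_relation:
  fixes x :: "nat \<Rightarrow> 'a::euclidean_space"
  obtains c r where "c r \<noteq> 0" and "(\<Sum>j\<le>r. c j *\<^sub>R x j) = 0"
proof -
  have "\<exists>n. x n \<in> span (x ` {..<n})"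
  proof (rule ccontr)
    assume "\<nexists>n. x n \<in> span (x ` {..<n})"
    then have "dim (x ` {..<n}) = n" for n
      by (induction n) (simp_all add: lessThan_Suc dim_insert)
    then show False
      using dim_subset_UNIV[of "x ` {..<Suc DIM('a)}"] by simp
  qed
  then obtain n c where "x n = (\<Sum>j<n. c j *\<^sub>R x j)"
    using in_span_image_lessThan by blast
  then have "(\<Sum>j\<le>n. (c(n := -1)) j *\<^sub>R x j) = 0"
    by (simp add: lessThan_Suc_atMost[symmetric])
  then show thesis
    by (rule that[rotated]) simp
qed

lemma matrix_add_rdistrib: "((A :: 'a::semiring_1^'n^'m) + B) ** C = A ** C + B ** C"
  by (vector matrix_matrix_mult_def sum.distrib[symmetric] field_simps)

lemma matrix_mul_sum_scaleR:
  fixes A :: "real^'n^'m" and B :: "real^'q^'p" and M :: "'i \<Rightarrow> real^'p^'n"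
  shows "(\<Sum>l\<in>S. c l *\<^sub>R (A ** M l ** B)) = A ** (\<Sum>l\<in>S. c l *\<^sub>R M l) ** B"
proof (induction S rule: infinite_finite_induct)
  case (insert l S)
  then show ?case
    by (simp add: matrix_add_ldistrib matrix_add_rdistrib matrix_scalar_ac scalar_matrix_assoc)
qed simp_all

lemma matpow_add: "matpow A (m + n) = matpow A m ** matpow A n"
  by (induction m) (simp_all add: matrix_mul_assoc)

lemma rnn_coeff_linear_recurrence:
  fixes Wzh :: "real^'h^'y" and Whh :: "real^'h^'h" and Whx :: "real^'x^'h"
  obtains c r where "c r \<noteq> 0"
    and "\<And>k. (\<Sum>j\<le>r. c j *\<^sub>R rnn_coeff Wzh Whh Whx (k + j)) = 0"
proof -
  obtain c r where "c r \<noteq> 0" and rel: "(\<Sum>j\<le>r. c j *\<^sub>R matpow Whh j) = 0"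
    using ex_nontrivial_linear_relation .
  have "(\<Sum>j\<le>r. c j *\<^sub>R rnn_coeff Wzh Whh Whx (k + j)) = 0" for k
  proof -
    have "(\<Sum>j\<le>r. c j *\<^sub>R rnn_coeff Wzh Whh Whx (k + j))
        = (\<Sum>j\<le>r. c j *\<^sub>R ((Wzh ** matpow Whh k) ** matpow Whh j ** Whx))"
      by (simp add: rnn_coeff_def matpow_add matrix_mul_assoc)
    also have "\<dots> = (Wzh ** matpow Whh k) ** (\<Sum>j\<le>r. c j *\<^sub>R matpow Whh j) ** Whx"
      by (rule matrix_mul_sum_scaleR)
    finally show ?thesis
      by (simp add: rel)
  qed
  with \<open>c r \<noteq> 0\<close> show thesis
    by (rule that)
qed

lemma rnn_coeff_not_long_memory: "\<not> long_memory (rnn_coeff Wzh Whh Whx)"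
proof
  assume "long_memory (rnn_coeff Wzh Whh Whx)"
  then obtain i j d c where "0 < d" "c \<noteq> 0"
    and equiv: "(\<lambda>k. rnn_coeff Wzh Whh Whx k $ i $ j) \<sim>[at_top] (\<lambda>k. c * real k powr (-d-1))"
    unfolding long_memory_def by blast
  obtain c' r where "c' r \<noteq> 0"
    and rec: "\<And>k. (\<Sum>l\<le>r. c' l *\<^sub>R rnn_coeff Wzh Whh Whx (k + l)) = 0"
    using rnn_coeff_linear_recurrence[where Wzh = Wzh and Whh = Whh and Whx = Whx] by blast
  have "(\<Sum>l\<le>r. c' l * rnn_coeff Wzh Whh Whx (k + l) $ i $ j)
      = (\<Sum>l\<le>r. c' l *\<^sub>R rnn_coeff Wzh Whh Whx (k + l)) $ i $ j" for k
    by (simp add: sum_component)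
  then have "\<forall>k. (\<Sum>l\<le>r. c' l * rnn_coeff Wzh Whh Whx (k + l) $ i $ j) = 0"
    using rec by simp
  moreover have "\<not> (\<forall>k. (\<Sum>l\<le>r. c' l * rnn_coeff Wzh Whh Whx (k + l) $ i $ j) = 0)"
    using \<open>0 < d\<close> \<open>c \<noteq> 0\<close> \<open>c' r \<noteq> 0\<close>
    by (intro no_linear_recurrence asymp_equiv_powr_tendsto_0[OF equiv]
        asymp_equiv_powr_shift_ratio[OF equiv] asymp_equiv_powr_eventually_nonzero[OF equiv]) simp_all
  ultimately show False
    by blast
qed

lemma fdiff_w_eq_gbinomial: "fdiff_w k d = (-1) ^ k * (d gchoose k)"
proof -
  have "fdiff_w k d = pochhammer (-d) k / fact k"
    by (simp add: fdiff_w_def pochhammer_prod fact_prod_Suc atLeast0LessThan prod_dividef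
        of_nat_prod algebra_simps)
  then show ?thesis
    by (simp add: gbinomial_pochhammer)
qed

lemma fdiff_w_asymp_equiv:
  assumes "d \<notin> \<nat>"
  shows "(\<lambda>k. fdiff_w k d) \<sim>[at_top] (\<lambda>k. real k powr (-d-1) / Gamma (-d))"
proof (rule asymp_equivI')
  have "Gamma (-d) \<noteq> 0"
    using assms by (intro Gamma_nonzero) (simp add: uminus_in_nonpos_Ints_iff)
  have "(\<lambda>k. (d gchoose k) / ((-1) ^ k / exp ((d+1) * ln (real k)))) \<longlonglongrightarrow> inverse (Gamma (-d))"
    using gbinomial_asymptotic[of d] by simp
  then have "(\<lambda>k. Gamma (-d) * ((d gchoose k) / ((-1) ^ k / exp ((d+1) * ln (real k)))))
      \<longlonglongrightarrow> Gamma (-d) * inverse (Gamma (-d))"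
    by (intro tendsto_intros)
  also have "Gamma (-d) * inverse (Gamma (-d)) = 1"
    using \<open>Gamma (-d) \<noteq> 0\<close> by simp
  finally show "(\<lambda>k. fdiff_w k d / (real k powr (-d-1) / Gamma (-d))) \<longlonglongrightarrow> 1"
  proof (rule Lim_transform_eventually)
    show "\<forall>\<^sub>F k in sequentially.
        Gamma (-d) * ((d gchoose k) / ((-1) ^ k / exp ((d+1) * ln (real k))))
          = fdiff_w k d / (real k powr (-d-1) / Gamma (-d))"
      using eventually_gt_at_top[of 0]
      by eventually_elim (auto simp: fdiff_w_eq_gbinomial powr_def exp_minus field_simps mult_exp_exp)
  qed
qed

lemma matpow_zero: "matpow 0 n = (if n = 0 then mat 1 else 0)"
  by (cases n) simp_all

lemma mrnnf_coeff_memory_path_entry: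
  assumes "0 < k"
  shows "mrnnf_coeff (0::real^'h^'y) (0::real^'h^'h) (0::real^'x^'h) (\<chi> a b. 1 :: real^'m^'y)
           (0::real^'m^'m) (\<chi> a b. 1 :: real^'x^'m) d k $ i $ l
       = real CARD('m) * fdiff_w k (d $ l)"
proof -
  have "(\<Sum>j\<in>{1..k}. matpow (0::real^'m^'m) (k - j) ** (\<chi> a b. 1) ** fdiff_minus_I_coeff d j)
      = (\<Sum>j\<in>{1..k}. if j = k then (\<chi> a b. 1 :: real^'x^'m) ** fdiff_minus_I_coeff d j else 0)"
    by (intro sum.cong) (auto simp: matpow_zero)
  also have "\<dots> = (\<chi> a b. 1 :: real^'x^'m) ** fdiff_minus_I_coeff d k"
    using assms by simp
  finally have memory_part:
    "(\<Sum>j\<in>{1..k}. matpow (0::real^'m^'m) (k - j) ** (\<chi> a b. 1) ** fdiff_minus_I_coeff d j)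
      = (\<chi> a b. 1 :: real^'x^'m) ** fdiff_minus_I_coeff d k" .
  show ?thesis
    unfolding mrnnf_coeff_def memory_part
    using assms by (simp add: matrix_matrix_mult_def fdiff_minus_I_coeff_def
        if_distrib if_distribR cong: if_cong)
qed

lemma mrnnf_coeff_memory_path_long_memory:
  assumes "0 < d $ l" and "d $ l < 1/2"
  shows "long_memory (mrnnf_coeff (0::real^'h^'y) (0::real^'h^'h) (0::real^'x^'h)
           (\<chi> a b. 1 :: real^'m^'y) (0::real^'m^'m) (\<chi> a b. 1 :: real^'x^'m) d)"
    (is "long_memory ?A")
proof -
  let ?e = "d $ l"
  have "?e \<notin> \<nat>"
    using assms by (auto elim!: Nats_cases)
  then have "Gamma (-?e) \<noteq> 0"
    by (intro Gamma_nonzero) (simp add: uminus_in_nonpos_Ints_iff)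
  have "(\<lambda>k. real CARD('m) * fdiff_w k ?e)
      \<sim>[at_top] (\<lambda>k. real CARD('m) * (real k powr (-?e-1) / Gamma (-?e)))"
    by (intro asymp_equiv_intros fdiff_w_asymp_equiv \<open>?e \<notin> \<nat>\<close>)
  moreover have "\<forall>\<^sub>F k in at_top. real CARD('m) * fdiff_w k ?e = ?A k $ undefined $ l"
    using eventually_gt_at_top[of 0] by eventually_elim (simp add: mrnnf_coeff_memory_path_entry)
  ultimately have "(\<lambda>k. ?A k $ undefined $ l)
      \<sim>[at_top] (\<lambda>k. (real CARD('m) / Gamma (-?e)) * real k powr (-?e-1))"
    by (rule asymp_equiv_transfer) simp
  then show ?thesis
    unfolding long_memory_def using assms \<open>Gamma (-?e) \<noteq> 0\<close>
    by (intro exI[of _ undefined] exI[of _ l] exI[of _ ?e] exI[of _ "real CARD('m) / Gamma (-?e)"]) simp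
qed

theorem theorem3:
  shows "(\<forall>(d :: real^'x). (\<forall>i. 0 < d $ i \<and> d $ i < 1/2) \<longrightarrow>
            (\<exists>(Wzh :: real^'h^'y) (Whh :: real^'h^'h) (Whx :: real^'x^'h)
               (Wzm :: real^'m^'y) (Wmm :: real^'m^'m) (Wmf :: real^'x^'m).
               long_memory (mrnnf_coeff Wzh Whh Whx Wzm Wmm Wmf d)))
       \<and> (\<forall>(Wzh :: real^'h^'y) (Whh :: real^'h^'h) (Whx :: real^'x^'h).
            \<not> long_memory (rnn_coeff Wzh Whh Whx))"
proof (intro conjI allI impI)
  fix d :: "real^'x"
  assume "\<forall>i. 0 < d $ i \<and> d $ i < 1/2"
  then have "long_memory (mrnnf_coeff (0::real^'h^'y) (0::real^'h^'h) (0::real^'x^'h)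
      (\<chi> a b. 1 :: real^'m^'y) (0::real^'m^'m) (\<chi> a b. 1 :: real^'x^'m) d)"
    by (intro mrnnf_coeff_memory_path_long_memory[of d undefined]) simp_all
  then show "\<exists>(Wzh :: real^'h^'y) (Whh :: real^'h^'h) (Whx :: real^'x^'h)
      (Wzm :: real^'m^'y) (Wmm :: real^'m^'m) (Wmf :: real^'x^'m).
      long_memory (mrnnf_coeff Wzh Whh Whx Wzm Wmm Wmf d)"
    by blast
next
  fix Wzh :: "real^'h^'y" and Whh :: "real^'h^'h" and Whx :: "real^'x^'h"
  show "\<not> long_memory (rnn_coeff Wzh Whh Whx)"
    by (rule rnn_coeff_not_long_memory)
qed

end
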